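(* Let $\gamma\in\mathbb{Z}[\mathrm{i}]$ with $|\gamma|>1$, let $(\gamma,D)$ be an integral numeration system, and let $r\ge2$ be a real number such that $D\subseteq D_\gamma:=\{d\in\mathbb{Z}[\mathrm{i}]:|d|\le r|\gamma|\}$. If $n\ge1$ is an integer and $z\in\mathbb{Z}[\mathrm{i}]$ satisfies $|z|\le r|\gamma|^n$, then there exists a word $w=d_{n-1}\cdots d_0\in D_\gamma^n$ with $[w]_\gamma=z$.
   Context: For a finite $D\subset\mathbb{Z}[\mathrm{i}]$ containing $0$, a word $w=w_{n-1}\cdots w_0$ over $D$ has value $[w]_\gamma=\sum_{j=0}^{n-1}w_j\gamma^j$. $(\gamma,D)$ is an integral numeration system if every Gaussian integer has a unique such expansion (up to leading zeros). *)

theory Defs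
  imports "HOL-Analysis.Analysis"
begin

definition gauss_ints :: "complex set" where
  "gauss_ints = {z. Re z \<in> \<int> \<and> Im z \<in> \<int>}"

text \<open>A word w = w_{n-1} ... w_0 is represented by the list [w_0, w_1, ..., w_{n-1}],
  i.e. the list entry at index j is the digit w_j of weight gamma^j.\<close>
definition word_val :: "complex \<Rightarrow> complex list \<Rightarrow> complex" where
  "word_val \<gamma> w = (\<Sum>j<length w. w ! j * \<gamma> ^ j)"

definition digit :: "complex list \<Rightarrow> nat \<Rightarrow> complex" where
  "digit w j = (if j < length w then w ! j else 0)"

definition integral_numeration_system :: "complex \<Rightarrow> complex set \<Rightarrow> bool" where
  "integral_numeration_system \<gamma> D \<longleftrightarrow>
     finite D \<and> D \<subseteq> gauss_ints \<and> 0 \<in> D \<and>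
     (\<forall>z\<in>gauss_ints. \<exists>w. set w \<subseteq> D \<and> word_val \<gamma> w = z) \<and>
     (\<forall>v w. set v \<subseteq> D \<longrightarrow> set w \<subseteq> D \<longrightarrow> word_val \<gamma> v = word_val \<gamma> w
        \<longrightarrow> (\<forall>j. digit v j = digit w j))"

definition D_gamma :: "real \<Rightarrow> complex \<Rightarrow> complex set" where
  "D_gamma r \<gamma> = {d \<in> gauss_ints. cmod d \<le> r * cmod \<gamma>}"

end

theory Submission
  imports Defs
begin

text \<open>Divide z by \<gamma> in \<complex> and round both coordinates of the quotient towards zero.
  The Gaussian integer q is then no larger than z/\<gamma> in modulus, so |q| \<le> r|\<gamma>|^(n-1), and the
  rounding error is at most \<surd>2 in modulus, so the remainder z - q\<gamma> has modulus
  at most \<surd>2 |\<gamma>| \<le> r|\<gamma>|. Taking z - q\<gamma> as the digit of weight 1 and expanding q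
  by induction gives a word of length n.\<close>

definition round_toward_zero :: "real \<Rightarrow> int" where
  "round_toward_zero x = (if x \<ge> 0 then \<lfloor>x\<rfloor> else \<lceil>x\<rceil>)"

lemma abs_round_toward_zero_le: "\<bar>of_int (round_toward_zero x)\<bar> \<le> \<bar>x\<bar>"
proof (cases "x \<ge> 0")
  case False
  then have "of_int \<lceil>x\<rceil> \<le> (0::real)"
    by (simp add: ceiling_le_zero)
  with False show ?thesis
    using le_of_int_ceiling[of x] by (simp add: round_toward_zero_def)
qed (simp add: round_toward_zero_def)

lemma abs_sub_round_toward_zero_le: "\<bar>x - of_int (round_toward_zero x)\<bar> \<le> 1"
  unfolding round_toward_zero_def by (auto simp: abs_if) linarith+

definition gauss_truncate :: "complex \<Rightarrow> complex" where
  "gauss_truncate t =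
     Complex (of_int (round_toward_zero (Re t))) (of_int (round_toward_zero (Im t)))"

lemma gauss_truncate_in_gauss_ints: "gauss_truncate t \<in> gauss_ints"
  by (simp add: gauss_truncate_def gauss_ints_def)

lemma norm_gauss_truncate_le: "cmod (gauss_truncate t) \<le> cmod t"
  unfolding cmod_def gauss_truncate_def
  using abs_round_toward_zero_le[of "Re t"] abs_round_toward_zero_le[of "Im t"]
  by (simp add: abs_le_square_iff add_mono)

lemma norm_diff_gauss_truncate_le: "cmod (t - gauss_truncate t) \<le> sqrt 2"
proof -
  have "(Re t - of_int (round_toward_zero (Re t)))\<^sup>2 \<le> 1"
       "(Im t - of_int (round_toward_zero (Im t)))\<^sup>2 \<le> 1"
    using abs_sub_round_toward_zero_le[of "Re t"] abs_sub_round_toward_zero_le[of "Im t"]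
    by (metis abs_le_square_iff abs_one one_power2)+
  then show ?thesis
    unfolding cmod_def gauss_truncate_def by simp
qed

lemma gauss_ints_diff: "a \<in> gauss_ints \<Longrightarrow> b \<in> gauss_ints \<Longrightarrow> a - b \<in> gauss_ints"
  unfolding gauss_ints_def by auto

lemma gauss_ints_mult: "a \<in> gauss_ints \<Longrightarrow> b \<in> gauss_ints \<Longrightarrow> a * b \<in> gauss_ints"
  unfolding gauss_ints_def by auto

lemma gauss_division_truncated:
  assumes "z \<in> gauss_ints" "\<gamma> \<in> gauss_ints" "\<gamma> \<noteq> 0"
  obtains q where "q \<in> gauss_ints" "cmod q * cmod \<gamma> \<le> cmod z"
    "cmod (z - q * \<gamma>) \<le> sqrt 2 * cmod \<gamma>"
proof
  let ?q = "gauss_truncate (z / \<gamma>)"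
  show "?q \<in> gauss_ints"
    by (rule gauss_truncate_in_gauss_ints)
  have "cmod ?q * cmod \<gamma> \<le> cmod (z / \<gamma>) * cmod \<gamma>"
    by (simp add: mult_right_mono norm_gauss_truncate_le)
  also have "\<dots> = cmod z"
    using \<open>\<gamma> \<noteq> 0\<close> by (simp add: norm_divide)
  finally show "cmod ?q * cmod \<gamma> \<le> cmod z" .
  have "z - ?q * \<gamma> = (z / \<gamma> - ?q) * \<gamma>"
    using \<open>\<gamma> \<noteq> 0\<close> by (simp add: field_simps)
  then show "cmod (z - ?q * \<gamma>) \<le> sqrt 2 * cmod \<gamma>"
    by (simp add: norm_mult mult_right_mono norm_diff_gauss_truncate_le)
qed

lemma word_val_Cons: "word_val \<gamma> (d # w) = d + \<gamma> * word_val \<gamma> w"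
  unfolding word_val_def
  by (simp add: sum.lessThan_Suc_shift sum_distrib_left mult_ac del: sum.lessThan_Suc)

lemma word_over_D_gamma_exists:
  assumes "\<gamma> \<in> gauss_ints" "\<gamma> \<noteq> 0" "sqrt 2 \<le> r" "n \<ge> 1"
    and "z \<in> gauss_ints" "cmod z \<le> r * cmod \<gamma> ^ n"
  shows "\<exists>w. length w = n \<and> set w \<subseteq> D_gamma r \<gamma> \<and> word_val \<gamma> w = z"
  using \<open>n \<ge> 1\<close> \<open>z \<in> gauss_ints\<close> \<open>cmod z \<le> r * cmod \<gamma> ^ n\<close>
proof (induction n arbitrary: z rule: dec_induct)
  case base
  then show ?case
    by (intro exI[of _ "[z]"]) (simp add: D_gamma_def word_val_def)
next
  case (step n)
  obtain q where q: "q \<in> gauss_ints" "cmod q * cmod \<gamma> \<le> cmod z"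
    and rem: "cmod (z - q * \<gamma>) \<le> sqrt 2 * cmod \<gamma>"
    using gauss_division_truncated[OF step.prems(1) assms(1,2)] by blast
  have "cmod q * cmod \<gamma> \<le> (r * cmod \<gamma> ^ n) * cmod \<gamma>"
    using q(2) step.prems(2) by (simp add: mult_ac)
  then have "cmod q \<le> r * cmod \<gamma> ^ n"
    using \<open>\<gamma> \<noteq> 0\<close> by simp
  then obtain w where w: "length w = n" "set w \<subseteq> D_gamma r \<gamma>" "word_val \<gamma> w = q"
    using step.IH q(1) by blast
  have "z - q * \<gamma> \<in> D_gamma r \<gamma>"
    using rem \<open>sqrt 2 \<le> r\<close> step.prems(1) q(1) assms(1)
    by (auto simp: D_gamma_def intro!: gauss_ints_diff gauss_ints_mult
             elim!: order_trans intro: mult_right_mono)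
  with w show ?case
    by (intro exI[of _ "(z - q * \<gamma>) # w"]) (simp add: word_val_Cons mult.commute)
qed

theorem lemma2p8:
  fixes \<gamma> z :: complex and D :: "complex set" and r :: real and n :: nat
  assumes "\<gamma> \<in> gauss_ints" and "cmod \<gamma> > 1"
    and "integral_numeration_system \<gamma> D"
    and "r \<ge> 2" and "D \<subseteq> D_gamma r \<gamma>"
    and "n \<ge> 1" and "z \<in> gauss_ints" and "cmod z \<le> r * cmod \<gamma> ^ n"
  shows "\<exists>w. length w = n \<and> set w \<subseteq> D_gamma r \<gamma> \<and> word_val \<gamma> w = z"
proof (rule word_over_D_gamma_exists)
  show "\<gamma> \<noteq> 0"
    using \<open>cmod \<gamma> > 1\<close> by auto
  have "sqrt 2 \<le> 2"
    by (rule real_le_lsqrt) auto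
  then show "sqrt 2 \<le> r"
    using \<open>r \<ge> 2\<close> by linarith
qed (use assms in auto)

end
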